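(* In the storage model of the context, assume that the graph $\mathcal G$ on $\{1,\dots,n\}$ in which $j,k$ are adjacent iff $j,k\in S_i$ for some $i$ is connected, and that the linear system \[ \sum_{j=1}^{\kappa_i}\alpha_{ij}=\lambda_i\ (i=1,\dots,\mathcal K),\qquad \sum_{i=1}^{\mathcal K}\sum_{j=1}^{\kappa_i}\alpha_{ij}\,\delta_{\ell,s^i_j}=\tfrac1n\ (\ell=1,\dots,n) \] has a positive solution. Let the embedded load chain $X^e(m)$ be constructed using either the JSQ routing policy or the $\varepsilon$-PSERP. Then there exist $c_2>0$ and $a>0$ such that for all $x\in\mathbb N^n$ with $\max_{i}\bigl|x_i-\frac1n\sum_{j=1}^nx_j\bigr|\ge a$, \[ \mathbf E\bigl(f(X^e(m+1))-f(X^e(m))\mid X^e(m)=x\bigr)\le -c_2\sqrt{f(x)}, \] where $f(y)=\sum_{l=1}^n\bigl(y_l-\frac1n\sum_{k=1}^ny_k\bigr)^2$.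
   Context: Storage model: $n$ nodes, non-empty neighborhoods $S_1,\dots,S_{\mathcal K}\subset\{1,\dots,n\}$ covering $\{1,\dots,n\}$, $\kappa_i=|S_i|$, $S_i=\{s^i_1,\dots,s^i_{\kappa_i}\}$ a fixed enumeration. Items arrive at $S_i$ as independent Poisson processes with rates $\lambda_i>0$, $\sum_i\lambda_i=1$; each item is stored at one node of its neighborhood according to the routing policy, independently across arrivals. $X^e(m)\in\mathbb N^n$ is the vector of node loads after the $m$-th arrival. For $x\in\mathbb N^n$, $s^i_{j_{\min}}(x)$ is the first node of $S_i$ at which $x$ is minimal over $S_i$, $s^i_{j_{\max}}(x)$ the last node of $S_i$ at which $x$ is maximal over $S_i$. JSQ: an arriving item at $S_i$ goes to $s^i_{j_{\min}}(x)$. $\varepsilon$-PSERP (given a positive solution $\alpha_{ij}$ and $0<\varepsilon<\min\alpha_{ij}$): an item arriving at $S_i$ goes to $s^i_j$ with probability $(\alpha_{ij}+\varepsilon)/\lambda_i$ if $s^i_j=s^i_{j_{\min}}(x)$, $(\alpha_{ij}-\varepsilon)/\lambda_i$ if $s^i_j=s^i_{j_{\max}}(x)$, $\alpha_{ij}/\lambda_i$ otherwise; if $\kappa_i=1$ it goes to the unique node of $S_i$. $\delta_{\ell,m}$ is the Kronecker delta. *)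

theory Defs
  imports "HOL-Probability.Probability"
begin

text \<open>Nodes are 0..<n (shifted by one w.r.t. the paper), neighborhoods are indexed by
0..<K, and S i is the fixed enumeration of the i-th neighborhood (a distinct list).
Load vectors are functions nat => nat; only the coordinates below n matter.\<close>

datatype policy = JSQ | PSERP real

definition jmin :: "(nat \<Rightarrow> nat list) \<Rightarrow> nat \<Rightarrow> (nat \<Rightarrow> nat) \<Rightarrow> nat" where
  "jmin S i x = (LEAST j. j < length (S i) \<and> x (S i ! j) = Min (x ` set (S i)))"

definition jmax :: "(nat \<Rightarrow> nat list) \<Rightarrow> nat \<Rightarrow> (nat \<Rightarrow> nat) \<Rightarrow> nat" where
  "jmax S i x = (GREATEST j. j < length (S i) \<and> x (S i ! j) = Max (x ` set (S i)))"

definition route_prob ::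
  "policy \<Rightarrow> (nat \<Rightarrow> nat list) \<Rightarrow> (nat \<Rightarrow> real) \<Rightarrow> (nat \<Rightarrow> nat \<Rightarrow> real)
     \<Rightarrow> nat \<Rightarrow> nat \<Rightarrow> (nat \<Rightarrow> nat) \<Rightarrow> real" where
  "route_prob pol S lam alpha i j x =
     (case pol of
        JSQ \<Rightarrow> (if j = jmin S i x then 1 else 0)
      | PSERP eps \<Rightarrow>
          (if length (S i) = 1 then 1
           else if j = jmin S i x then (alpha i j + eps) / lam i
           else if j = jmax S i x then (alpha i j - eps) / lam i
           else alpha i j / lam i))"

text \<open>one-step transition law of the embedded load chain X^e from state x:
the arrival lands at S i with probability lam i (superposition of the Poisson
streams, sum of rates 1), then it is routed according to the policy.\<close>
definition step_pmf ::
  "policy \<Rightarrow> nat \<Rightarrow> (nat \<Rightarrow> nat list) \<Rightarrow> (nat \<Rightarrow> real) \<Rightarrow> (nat \<Rightarrow> nat \<Rightarrow> real)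
     \<Rightarrow> (nat \<Rightarrow> nat) \<Rightarrow> (nat \<Rightarrow> nat) pmf" where
  "step_pmf pol K S lam alpha x =
     bind_pmf (pmf_of_list (map (\<lambda>i. (i, lam i)) [0..<K]))
       (\<lambda>i. map_pmf (\<lambda>j. x((S i ! j) := Suc (x (S i ! j))))
              (pmf_of_list (map (\<lambda>j. (j, route_prob pol S lam alpha i j x)) [0..<length (S i)])))"

definition mean_load :: "nat \<Rightarrow> (nat \<Rightarrow> nat) \<Rightarrow> real" where
  "mean_load n y = (\<Sum>k<n. real (y k)) / real n"

definition fdev :: "nat \<Rightarrow> (nat \<Rightarrow> nat) \<Rightarrow> real" where
  "fdev n y = (\<Sum>l<n. (real (y l) - mean_load n y)\<^sup>2)"

definition adjacent :: "nat \<Rightarrow> (nat \<Rightarrow> nat list) \<Rightarrow> nat \<Rightarrow> nat \<Rightarrow> bool" where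
  "adjacent K S j k \<longleftrightarrow> (\<exists>i<K. j \<in> set (S i) \<and> k \<in> set (S i))"

definition graph_connected :: "nat \<Rightarrow> nat \<Rightarrow> (nat \<Rightarrow> nat list) \<Rightarrow> bool" where
  "graph_connected n K S \<longleftrightarrow>
     (\<forall>j<n. \<forall>k<n. (j, k) \<in> {(u, v). adjacent K S u v}\<^sup>*)"

end

theory Submission
  imports Defs
begin

text \<open>Adding an item at node \<open>l\<close> changes \<open>f\<close> by \<open>2(x\<^sub>l - \<mu>) + 1 - 1/n\<close>, so the drift of \<open>f\<close> is
  \<open>1 - 1/n + 2(E x\<^sub>L - \<mu>)\<close>, where \<open>L\<close> is the node receiving the item. Routing proportionally to
  \<open>\<alpha>\<close> gives \<open>E x\<^sub>L = \<mu>\<close>, and both policies improve on that by at least \<open>c\<close> times the total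
  spread \<open>R(x)\<close> of the loads over the neighbourhoods, whence drift \<open>\<le> 1 - 2cR(x)\<close>. By
  connectivity every load gap, hence every deviation from \<open>\<mu>\<close> and \<open>\<surd>f\<close>, is \<open>O(R(x))\<close>; so for
  large deviations \<open>1 - 2cR(x) \<le> -cR(x) \<le> -c\<^sub>2\<surd>f(x)\<close>.\<close>

section \<open>The one-step law of the load chain\<close>

lemma sum_list_filter_fst_indexed:
  "sum_list (map snd (filter (\<lambda>z. fst z = i) (map (\<lambda>j. (j, w j)) [0..<N])))
     = (if i < N then (w i :: real) else 0)"
  by (induction N) (auto simp: less_Suc_eq)

lemma pmf_of_list_indexed:
  fixes w :: "nat \<Rightarrow> real"
  assumes "\<forall>i<N. 0 \<le> w i" and "(\<Sum>i<N. w i) = 1"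
  shows "pmf (pmf_of_list (map (\<lambda>i. (i, w i)) [0..<N])) i = (if i < N then w i else 0)"
    and "set_pmf (pmf_of_list (map (\<lambda>i. (i, w i)) [0..<N])) \<subseteq> {..<N}"
proof -
  let ?xs = "map (\<lambda>i. (i, w i)) [0..<N]"
  have "sum_list (map snd ?xs) = (\<Sum>i<N. w i)"
    by (simp add: sum_list_sum_nth atLeast0LessThan o_def)
  then have wf: "pmf_of_list_wf ?xs"
    using assms by (auto intro!: pmf_of_list_wfI)
  show "pmf (pmf_of_list ?xs) i = (if i < N then w i else 0)"
    using pmf_pmf_of_list[OF wf] sum_list_filter_fst_indexed by simp
  show "set_pmf (pmf_of_list ?xs) \<subseteq> {..<N}"
    using set_pmf_of_list[OF wf] by auto
qed

lemma expectation_pmf_of_list_indexed: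
  fixes w g :: "nat \<Rightarrow> real"
  assumes "\<forall>i<N. 0 \<le> w i" and "(\<Sum>i<N. w i) = 1"
  shows "measure_pmf.expectation (pmf_of_list (map (\<lambda>i. (i, w i)) [0..<N])) g
           = (\<Sum>i<N. w i * g i)"
  by (subst integral_measure_pmf[of "{..<N}"])
     (use pmf_of_list_indexed[OF assms] in auto)

lemma expectation_step_pmf:
  fixes g :: "(nat \<Rightarrow> nat) \<Rightarrow> real"
  assumes "\<forall>i<K. 0 \<le> lam i" and "(\<Sum>i<K. lam i) = 1"
    and "\<forall>i<K. (\<forall>j<length (S i). 0 \<le> route_prob pol S lam alpha i j x) \<and>
                (\<Sum>j<length (S i). route_prob pol S lam alpha i j x) = 1"
  shows "measure_pmf.expectation (step_pmf pol K S lam alpha x) g =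
    (\<Sum>i<K. lam i * (\<Sum>j<length (S i).
        route_prob pol S lam alpha i j x * g (x(S i ! j := Suc (x (S i ! j))))))"
proof -
  let ?P = "pmf_of_list (map (\<lambda>i. (i, lam i)) [0..<K])"
  let ?Q = "\<lambda>i. pmf_of_list (map (\<lambda>j. (j, route_prob pol S lam alpha i j x)) [0..<length (S i)])"
  let ?F = "\<lambda>i. map_pmf (\<lambda>j. x(S i ! j := Suc (x (S i ! j)))) (?Q i)"
  have finite_F: "finite (set_pmf (?F i))" if "i < K" for i
    using pmf_of_list_indexed(2)[of "length (S i)" "\<lambda>j. route_prob pol S lam alpha i j x"]
      assms(3) that
    by (auto intro: finite_subset)
  have "measure_pmf.expectation (step_pmf pol K S lam alpha x) g
      = (\<Sum>i<K. pmf ?P i *\<^sub>R measure_pmf.expectation (?F i) g)"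
    unfolding step_pmf_def
    by (rule pmf_expectation_bind) (use finite_F pmf_of_list_indexed(2)[OF assms(1,2)] in auto)
  also have "\<dots> = (\<Sum>i<K. lam i * (\<Sum>j<length (S i).
      route_prob pol S lam alpha i j x * g (x(S i ! j := Suc (x (S i ! j))))))"
    using assms by (intro sum.cong refl)
      (simp add: pmf_of_list_indexed(1) expectation_pmf_of_list_indexed)
  finally show ?thesis .
qed

section \<open>The deviation function\<close>

lemma fdev_eq_sum_squares:
  assumes "n > 0"
  shows "fdev n y = (\<Sum>l<n. (real (y l))\<^sup>2) - (\<Sum>l<n. real (y l))\<^sup>2 / real n"
proof -
  let ?T = "\<Sum>l<n. real (y l)"
  have "fdev n y = (\<Sum>l<n. (real (y l))\<^sup>2 - 2 * (?T / n) * real (y l) + (?T / n)\<^sup>2)"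
    unfolding fdev_def mean_load_def
    by (intro sum.cong) (auto simp: power2_eq_square algebra_simps)
  also have "\<dots> = (\<Sum>l<n. (real (y l))\<^sup>2) - 2 * (?T / n) * ?T + n * (?T / n)\<^sup>2"
    by (simp add: sum.distrib sum_subtractf sum_distrib_left)
  also have "\<dots> = (\<Sum>l<n. (real (y l))\<^sup>2) - ?T\<^sup>2 / n"
    using assms by (simp add: power2_eq_square field_simps)
  finally show ?thesis .
qed

lemma fdev_increment:
  assumes "l < n"
  shows "fdev n (x(l := Suc (x l))) = fdev n x + 2 * (real (x l) - mean_load n x) + 1 - 1 / real n"
proof -
  let ?y = "x(l := Suc (x l))"
  have n: "n > 0" using assms by simp
  have "(\<Sum>k<n. real (?y k)) = (\<Sum>k<n. real (x k) + (if k = l then 1 else 0))"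
    by (intro sum.cong) auto
  then have sum: "(\<Sum>k<n. real (?y k)) = (\<Sum>k<n. real (x k)) + 1"
    using assms by (simp add: sum.distrib)
  have "(\<Sum>k<n. (real (?y k))\<^sup>2)
      = (\<Sum>k<n. (real (x k))\<^sup>2 + (if k = l then 2 * real (x l) + 1 else 0))"
    by (intro sum.cong) (auto simp: power2_eq_square algebra_simps)
  then have squares: "(\<Sum>k<n. (real (?y k))\<^sup>2) = (\<Sum>k<n. (real (x k))\<^sup>2) + 2 * real (x l) + 1"
    using assms by (simp add: sum.distrib)
  show ?thesis
    using n unfolding fdev_eq_sum_squares[OF n] sum squares mean_load_def
    by (simp add: power2_eq_square field_simps)
qed

lemma sqrt_fdev_le:
  assumes "\<forall>l<n. \<bar>real (x l) - mean_load n x\<bar> \<le> B"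
  shows "sqrt (fdev n x) \<le> sqrt (real n) * B"
proof (cases "n = 0")
  case False
  then have B: "0 \<le> B" using assms by (meson abs_ge_zero order_trans not_gr_zero)
  have "fdev n x \<le> (\<Sum>l<n. B\<^sup>2)"
    unfolding fdev_def
    by (intro sum_mono) (use assms in \<open>auto intro: power2_le_iff_abs_le[THEN iffD2] B\<close>)
  then have "sqrt (fdev n x) \<le> sqrt (real n * B\<^sup>2)" by simp
  also have "\<dots> = sqrt (real n) * B" using B by (simp add: real_sqrt_mult)
  finally show ?thesis .
qed (simp add: fdev_def)

section \<open>Routing policies\<close>

definition nbhd_range :: "(nat \<Rightarrow> nat list) \<Rightarrow> nat \<Rightarrow> (nat \<Rightarrow> nat) \<Rightarrow> real" where
  "nbhd_range S i x = real (Max (x ` set (S i))) - real (Min (x ` set (S i)))"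

definition total_range :: "nat \<Rightarrow> (nat \<Rightarrow> nat list) \<Rightarrow> (nat \<Rightarrow> nat) \<Rightarrow> real" where
  "total_range K S x = (\<Sum>i<K. nbhd_range S i x)"

text \<open>Routing proportionally to \<open>\<alpha>\<close> has expected target load \<open>\<Sum>\<^sub>j \<alpha>\<^sub>i\<^sub>j x(S i ! j) / \<lambda>\<^sub>i\<close>; a policy
  with margin \<open>c\<close> lowers it by at least \<open>c\<close> times the spread of \<open>x\<close> over \<open>S i\<close>.\<close>
definition routing_margin ::
  "policy \<Rightarrow> (nat \<Rightarrow> nat list) \<Rightarrow> (nat \<Rightarrow> real) \<Rightarrow> (nat \<Rightarrow> nat \<Rightarrow> real) \<Rightarrow> nat \<Rightarrow> real \<Rightarrow> bool"
where
  "routing_margin pol S lam alpha i c \<longleftrightarrow> (\<forall>x.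
     (\<forall>j<length (S i). 0 \<le> route_prob pol S lam alpha i j x) \<and>
     (\<Sum>j<length (S i). route_prob pol S lam alpha i j x) = 1 \<and>
     lam i * (\<Sum>j<length (S i). route_prob pol S lam alpha i j x * real (x (S i ! j)))
       \<le> (\<Sum>j<length (S i). alpha i j * real (x (S i ! j))) - c * nbhd_range S i x)"

lemma abs_diff_le_nbhd_range:
  assumes "u \<in> set (S i)" and "v \<in> set (S i)"
  shows "\<bar>real (x u) - real (x v)\<bar> \<le> nbhd_range S i x"
proof -
  have "x u \<le> Max (x ` set (S i))" "x v \<le> Max (x ` set (S i))"
       "Min (x ` set (S i)) \<le> x u" "Min (x ` set (S i)) \<le> x v"
    using assms by auto
  then show ?thesis unfolding nbhd_range_def by linarith
qed

lemma nbhd_range_nonneg: "S i \<noteq> [] \<Longrightarrow> 0 \<le> nbhd_range S i x"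
  using abs_diff_le_nbhd_range[of "hd (S i)" S i "hd (S i)" x] by simp

lemma total_range_nonneg: "\<forall>i<K. S i \<noteq> [] \<Longrightarrow> 0 \<le> total_range K S x"
  unfolding total_range_def by (auto intro: sum_nonneg nbhd_range_nonneg)

lemma jmin_correct:
  assumes "S i \<noteq> []"
  shows "jmin S i x < length (S i)" and "x (S i ! jmin S i x) = Min (x ` set (S i))"
proof -
  have "Min (x ` set (S i)) \<in> x ` set (S i)" using assms by (intro Min_in) auto
  then obtain j where "j < length (S i)" "x (S i ! j) = Min (x ` set (S i))"
    by (auto simp: in_set_conv_nth)
  then have "jmin S i x < length (S i) \<and> x (S i ! jmin S i x) = Min (x ` set (S i))"
    unfolding jmin_def
    by (intro LeastI[where P = "\<lambda>j. j < length (S i) \<and> x (S i ! j) = Min (x ` set (S i))"]) auto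
  then show "jmin S i x < length (S i)" and "x (S i ! jmin S i x) = Min (x ` set (S i))"
    by auto
qed

lemma jmax_correct:
  assumes "S i \<noteq> []"
  shows "jmax S i x < length (S i)" and "x (S i ! jmax S i x) = Max (x ` set (S i))"
proof -
  have "Max (x ` set (S i)) \<in> x ` set (S i)" using assms by (intro Max_in) auto
  then obtain j where "j < length (S i)" "x (S i ! j) = Max (x ` set (S i))"
    by (auto simp: in_set_conv_nth)
  then have "jmax S i x < length (S i) \<and> x (S i ! jmax S i x) = Max (x ` set (S i))"
    unfolding jmax_def
    by (intro GreatestI_nat[where P = "\<lambda>j. j < length (S i) \<and> x (S i ! j) = Max (x ` set (S i))"
          and b = "length (S i)"]) auto
  then show "jmax S i x < length (S i)" and "x (S i ! jmax S i x) = Max (x ` set (S i))"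
    by auto
qed

text \<open>If \<open>x\<close> is constant on \<open>S i\<close>, then \<open>jmin\<close> is the first and \<open>jmax\<close> the last index.\<close>
lemma jmin_neq_jmax:
  assumes "2 \<le> length (S i)"
  shows "jmin S i x \<noteq> jmax S i x"
proof
  assume eq: "jmin S i x = jmax S i x"
  have ne: "S i \<noteq> []" using assms by auto
  have Min_eq_Max: "Min (x ` set (S i)) = Max (x ` set (S i))"
    using jmin_correct[of S i x, OF ne] jmax_correct[of S i x, OF ne] eq by simp
  have const: "x (S i ! j) = Min (x ` set (S i))" if "j < length (S i)" for j
  proof -
    have "Min (x ` set (S i)) \<le> x (S i ! j)" "x (S i ! j) \<le> Max (x ` set (S i))"
      using that by auto
    then show ?thesis using Min_eq_Max by simp
  qed
  have "jmin S i x \<le> 0"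
    unfolding jmin_def by (rule Least_le) (use const[of 0] ne in auto)
  moreover have "length (S i) - 1 \<le> jmax S i x"
    unfolding jmax_def
    by (rule Greatest_le_nat[where b = "length (S i)"]) (use const assms Min_eq_Max in auto)
  ultimately show False using eq assms by simp
qed

lemma routing_margin_JSQ:
  assumes ne: "S i \<noteq> []" and alpha_ge: "\<forall>j<length (S i). c \<le> alpha i j" and "0 \<le> c"
    and row: "(\<Sum>j<length (S i). alpha i j) = lam i"
  shows "routing_margin JSQ S lam alpha i c"
  unfolding routing_margin_def
proof (rule allI, intro conjI)
  fix x
  define L where "L = length (S i)"
  define jm where "jm = jmin S i x"
  define jM where "jM = jmax S i x"
  define y where "y = (\<lambda>j. real (x (S i ! j)))"
  have jm: "jm < L" "x (S i ! jm) = Min (x ` set (S i))"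
    using jmin_correct[of S i x, OF ne] unfolding jm_def L_def by auto
  have jM: "jM < L" "x (S i ! jM) = Max (x ` set (S i))"
    using jmax_correct[of S i x, OF ne] unfolding jM_def L_def by auto
  have route: "route_prob JSQ S lam alpha i j x = (if j = jm then 1 else 0)" for j
    by (simp add: route_prob_def jm_def)
  show "\<forall>j<length (S i). 0 \<le> route_prob JSQ S lam alpha i j x"
    by (simp add: route)
  show "(\<Sum>j<length (S i). route_prob JSQ S lam alpha i j x) = 1"
    using jm by (simp add: route L_def)
  have terms_nonneg: "0 \<le> alpha i j * (y j - y jm)" if "j < L" for j
  proof -
    have "Min (x ` set (S i)) \<le> x (S i ! j)" using that L_def by simp
    then show ?thesis
      using jm alpha_ge \<open>0 \<le> c\<close> that unfolding y_def L_def by force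
  qed
  have range: "y jM - y jm = nbhd_range S i x"
    using jm jM unfolding y_def nbhd_range_def by simp
  have "c * nbhd_range S i x \<le> alpha i jM * (y jM - y jm)"
    unfolding range using alpha_ge jM nbhd_range_nonneg[of S i x, OF ne] unfolding L_def
    by (intro mult_right_mono) auto
  also have "\<dots> \<le> (\<Sum>j<L. alpha i j * (y j - y jm))"
    by (rule member_le_sum) (use jM terms_nonneg in auto)
  also have "\<dots> = (\<Sum>j<L. alpha i j * y j) - lam i * y jm"
    using row by (simp add: right_diff_distrib sum_subtractf sum_distrib_right[symmetric] L_def)
  also have "\<dots> = (\<Sum>j<L. alpha i j * y j) - lam i * (\<Sum>j<L. route_prob JSQ S lam alpha i j x * y j)"
    using jm by (simp add: route if_distrib[of "\<lambda>a. a * _"] cong: if_cong)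
  finally show "lam i * (\<Sum>j<length (S i). route_prob JSQ S lam alpha i j x * real (x (S i ! j)))
      \<le> (\<Sum>j<length (S i). alpha i j * real (x (S i ! j))) - c * nbhd_range S i x"
    unfolding y_def L_def by linarith
qed

lemma routing_margin_PSERP:
  assumes ne: "S i \<noteq> []" and alpha_gt: "\<forall>j<length (S i). e < alpha i j" and "0 < e"
    and row: "(\<Sum>j<length (S i). alpha i j) = lam i" and "0 < lam i"
  shows "routing_margin (PSERP e) S lam alpha i e"
  unfolding routing_margin_def
proof (intro allI)
  fix x
  show "(\<forall>j<length (S i). 0 \<le> route_prob (PSERP e) S lam alpha i j x) \<and>
     (\<Sum>j<length (S i). route_prob (PSERP e) S lam alpha i j x) = 1 \<and>
     lam i * (\<Sum>j<length (S i). route_prob (PSERP e) S lam alpha i j x * real (x (S i ! j)))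
       \<le> (\<Sum>j<length (S i). alpha i j * real (x (S i ! j))) - e * nbhd_range S i x"
  proof (cases "length (S i) = 1")
    case True
    then obtain a where a: "S i = [a]" by (auto simp: length_Suc_conv)
    then show ?thesis using row by (simp add: route_prob_def nbhd_range_def)
  next
    case False
    then have "2 \<le> length (S i)" using ne by (cases "S i") (auto simp: Suc_le_eq)
    define L where "L = length (S i)"
    define jm where "jm = jmin S i x"
    define jM where "jM = jmax S i x"
    define y where "y = (\<lambda>j. real (x (S i ! j)))"
    have jm: "jm < L" "x (S i ! jm) = Min (x ` set (S i))"
      using jmin_correct[of S i x, OF ne] unfolding jm_def L_def by auto
    have jM: "jM < L" "x (S i ! jM) = Max (x ` set (S i))"
      using jmax_correct[of S i x, OF ne] unfolding jM_def L_def by auto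
    have neq: "jm \<noteq> jM"
      using jmin_neq_jmax[of S i x, OF \<open>2 \<le> length (S i)\<close>] unfolding jm_def jM_def .
    define w where "w = (\<lambda>j. alpha i j + (if j = jm then e else 0) - (if j = jM then e else 0))"
    have route: "route_prob (PSERP e) S lam alpha i j x = w j / lam i" for j
      using False neq unfolding route_prob_def w_def jm_def jM_def by auto
    have "0 \<le> w j" if "j < L" for j
      using alpha_gt that neq \<open>0 < e\<close> unfolding w_def L_def by (auto intro: less_imp_le)
    then have nonneg: "\<forall>j<L. 0 \<le> route_prob (PSERP e) S lam alpha i j x"
      using \<open>0 < lam i\<close> by (simp add: route)
    have "(\<Sum>j<L. w j) = lam i"
      using jm jM neq row unfolding w_def L_def by (simp add: sum.distrib sum_subtractf)
    then have sum_one: "(\<Sum>j<L. route_prob (PSERP e) S lam alpha i j x) = 1"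
      using \<open>0 < lam i\<close> by (simp add: route sum_divide_distrib[symmetric])
    have "lam i * (\<Sum>j<L. route_prob (PSERP e) S lam alpha i j x * y j) = (\<Sum>j<L. w j * y j)"
      using \<open>0 < lam i\<close> by (simp add: route sum_distrib_left)
    also have "\<dots> = (\<Sum>j<L. alpha i j * y j + (if j = jm then e * y j else 0)
                                           - (if j = jM then e * y j else 0))"
      by (rule sum.cong) (auto simp: w_def algebra_simps)
    also have "\<dots> = (\<Sum>j<L. alpha i j * y j) - e * nbhd_range S i x"
      using jm jM unfolding y_def nbhd_range_def
      by (simp add: sum.distrib sum_subtractf algebra_simps)
    finally show ?thesis using sum_one nonneg unfolding L_def y_def by simp
  qed
qed

lemma routing_margin_policy:
  assumes "\<forall>i<K. S i \<noteq> []"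
    and "\<forall>i<K. 0 < lam i"
    and "\<forall>i<K. \<forall>j<length (S i). 0 < alpha i j"
    and "\<forall>i<K. (\<Sum>j<length (S i). alpha i j) = lam i"
    and "pol = JSQ \<or> (\<exists>e. pol = PSERP e \<and> 0 < e \<and> (\<forall>i<K. \<forall>j<length (S i). e < alpha i j))"
  obtains c where "0 < c" and "\<forall>i<K. routing_margin pol S lam alpha i c"
proof (cases "pol = JSQ")
  case True
  \<comment> \<open>the element \<open>1\<close> keeps \<open>A\<close> nonempty even when \<open>K = 0\<close>\<close>
  define A where "A = insert 1 ((\<lambda>(i, j). alpha i j) ` (SIGMA i:{..<K}. {..<length (S i)}))"
  have "finite A" unfolding A_def by auto
  then have "0 < Min A" and "\<forall>i<K. \<forall>j<length (S i). Min A \<le> alpha i j"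
    using assms(3) unfolding A_def by (auto simp: Min_gr_iff intro!: Min_le)
  then show ?thesis
    using that[of "Min A"] routing_margin_JSQ assms True by auto
next
  case False
  then obtain e where "pol = PSERP e" "0 < e" "\<forall>i<K. \<forall>j<length (S i). e < alpha i j"
    using assms(5) by blast
  then show ?thesis
    using that[of e] routing_margin_PSERP assms by auto
qed

section \<open>The drift of the deviation function\<close>

lemma sum_balanced_weights:
  fixes g :: "nat \<Rightarrow> real"
  assumes "\<forall>i<K. set (S i) \<subseteq> {..<n}"
    and "\<forall>l<n. (\<Sum>i<K. \<Sum>j<length (S i).
                  alpha i j * (if l = S i ! j then 1 else 0)) = 1 / real n"
  shows "(\<Sum>i<K. \<Sum>j<length (S i). alpha i j * g (S i ! j)) = (\<Sum>l<n. g l) / real n"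
proof -
  have "(\<Sum>i<K. \<Sum>j<length (S i). alpha i j * g (S i ! j)) =
        (\<Sum>i<K. \<Sum>j<length (S i). \<Sum>l<n. alpha i j * (if l = S i ! j then 1 else 0) * g l)"
  proof (intro sum.cong refl)
    fix i j assume "i \<in> {..<K}" "j \<in> {..<length (S i)}"
    then have "S i ! j < n" using assms(1) nth_mem by blast
    then show "alpha i j * g (S i ! j)
        = (\<Sum>l<n. alpha i j * (if l = S i ! j then 1 else 0) * g l)"
      by (simp add: if_distrib[of "\<lambda>a. alpha i j * a * _"] cong: if_cong)
  qed
  also have "\<dots> = (\<Sum>l<n. \<Sum>i<K. \<Sum>j<length (S i). alpha i j * (if l = S i ! j then 1 else 0) * g l)"
    by (subst sum.swap) (simp add: sum.swap[of _ "{..<n}"])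
  also have "\<dots> = (\<Sum>l<n. g l / real n)"
    using assms(2) by (intro sum.cong refl) (simp add: sum_distrib_right[symmetric])
  finally show ?thesis by (simp add: sum_divide_distrib)
qed

lemma expectation_fdev_step_le:
  assumes subset: "\<forall>i<K. set (S i) \<subseteq> {..<n}"
    and lam: "\<forall>i<K. 0 \<le> lam i" "(\<Sum>i<K. lam i) = 1"
    and margin: "\<forall>i<K. routing_margin pol S lam alpha i c"
    and balanced: "\<forall>l<n. (\<Sum>i<K. \<Sum>j<length (S i).
                       alpha i j * (if l = S i ! j then 1 else 0)) = 1 / real n"
  shows "measure_pmf.expectation (step_pmf pol K S lam alpha x) (fdev n) - fdev n x
           \<le> 1 - 2 * c * total_range K S x"
proof -
  define r where "r i j = route_prob pol S lam alpha i j x" for i j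
  define y where "y l = real (x l)" for l
  define A where "A = fdev n x + 1 - 1 / real n - 2 * mean_load n x"
  have distribution: "\<forall>i<K. (\<forall>j<length (S i). 0 \<le> r i j) \<and> (\<Sum>j<length (S i). r i j) = 1"
    using margin unfolding routing_margin_def r_def by blast
  have "measure_pmf.expectation (step_pmf pol K S lam alpha x) (fdev n)
      = (\<Sum>i<K. lam i * (\<Sum>j<length (S i). r i j * (A + 2 * y (S i ! j))))"
  proof -
    have "fdev n (x(S i ! j := Suc (x (S i ! j)))) = A + 2 * y (S i ! j)"
      if "i < K" "j < length (S i)" for i j
      using fdev_increment[of "S i ! j" n x] subset nth_mem that
      unfolding A_def y_def by (auto simp: algebra_simps)
    then show ?thesis
      using expectation_step_pmf[OF lam] distribution unfolding r_def by simp
  qed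
  also have "\<dots> = (\<Sum>i<K. lam i * (A + 2 * (\<Sum>j<length (S i). r i j * y (S i ! j))))"
  proof (intro sum.cong refl)
    fix i assume "i \<in> {..<K}"
    then have "(\<Sum>j<length (S i). r i j) = 1" using distribution by blast
    then show "lam i * (\<Sum>j<length (S i). r i j * (A + 2 * y (S i ! j)))
        = lam i * (A + 2 * (\<Sum>j<length (S i). r i j * y (S i ! j)))"
      by (simp add: ring_distribs sum.distrib sum_distrib_left[symmetric]
                    sum_distrib_right[symmetric] mult.left_commute)
  qed
  also have "\<dots> = A + 2 * (\<Sum>i<K. lam i * (\<Sum>j<length (S i). r i j * y (S i ! j)))"
    using lam(2) by (simp add: ring_distribs sum.distrib sum_distrib_left
                               sum_distrib_right[symmetric] mult.left_commute)
  also have "\<dots> \<le> A + 2 * (\<Sum>i<K. (\<Sum>j<length (S i). alpha i j * y (S i ! j)) - c * nbhd_range S i x)"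
    using margin unfolding routing_margin_def r_def y_def
    by (auto intro!: sum_mono)
  also have "\<dots> = A + 2 * mean_load n x - 2 * c * total_range K S x"
    using sum_balanced_weights[OF subset balanced, of y]
    unfolding total_range_def mean_load_def y_def
    by (simp add: sum_subtractf sum_distrib_left algebra_simps)
  moreover have "0 \<le> 1 / real n" by simp
  ultimately show ?thesis
    unfolding A_def by linarith
qed

section \<open>Connectivity\<close>

lemma load_gap_bound_rtrancl:
  assumes "(j, k) \<in> {(u, v). adjacent K S u v}\<^sup>*" and ne: "\<forall>i<K. S i \<noteq> []"
  shows "\<exists>m::nat. \<forall>x. \<bar>real (x j) - real (x k)\<bar> \<le> real m * total_range K S x"
  using assms(1)
proof (induction rule: rtrancl_induct)
  case base
  show ?case by (rule exI[of _ 0]) simp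
next
  case (step u v)
  then obtain m where m: "\<forall>x. \<bar>real (x j) - real (x u)\<bar> \<le> real m * total_range K S x"
    by blast
  from step(2) obtain i where i: "i < K" "u \<in> set (S i)" "v \<in> set (S i)"
    by (auto simp: adjacent_def)
  have "\<bar>real (x j) - real (x v)\<bar> \<le> real (Suc m) * total_range K S x" for x
  proof -
    have "\<bar>real (x u) - real (x v)\<bar> \<le> nbhd_range S i x"
      using i by (intro abs_diff_le_nbhd_range)
    also have "\<dots> \<le> total_range K S x"
      unfolding total_range_def
      by (rule member_le_sum) (use i ne nbhd_range_nonneg in auto)
    finally show ?thesis using m[rule_format, of x] by (simp add: algebra_simps)
  qed
  then show ?case by blast
qed

lemma load_gap_le_total_range:
  assumes conn: "graph_connected n K S" and ne: "\<forall>i<K. S i \<noteq> []"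
  obtains M where "0 < M"
    and "\<forall>x j k. j < n \<longrightarrow> k < n \<longrightarrow> \<bar>real (x j) - real (x k)\<bar> \<le> M * total_range K S x"
proof -
  have "\<forall>p\<in>{..<n} \<times> {..<n}. \<exists>m::nat. \<forall>x.
          \<bar>real (x (fst p)) - real (x (snd p))\<bar> \<le> real m * total_range K S x"
    using conn load_gap_bound_rtrancl[OF _ ne] unfolding graph_connected_def by auto
  then obtain m where m: "\<forall>p\<in>{..<n} \<times> {..<n}. \<forall>x.
          \<bar>real (x (fst p)) - real (x (snd p))\<bar> \<le> real (m p) * total_range K S x"
    by metis
  define M where "M = 1 + (\<Sum>p\<in>{..<n} \<times> {..<n}. real (m p))"
  have "\<bar>real (x j) - real (x k)\<bar> \<le> M * total_range K S x" if "j < n" "k < n" for x j k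
  proof -
    have "real (m (j, k)) \<le> (\<Sum>p\<in>{..<n} \<times> {..<n}. real (m p))"
      by (rule member_le_sum) (use that in auto)
    then have "real (m (j, k)) \<le> M" unfolding M_def by simp
    then have "real (m (j, k)) * total_range K S x \<le> M * total_range K S x"
      using total_range_nonneg[OF ne] by (rule mult_right_mono)
    moreover have "\<bar>real (x j) - real (x k)\<bar> \<le> real (m (j, k)) * total_range K S x"
      using m that by (metis SigmaI fst_conv lessThan_iff snd_conv)
    ultimately show ?thesis by linarith
  qed
  moreover have "0 < M" unfolding M_def by (simp add: sum_nonneg add_pos_nonneg)
  ultimately show ?thesis using that by blast
qed

lemma abs_sub_mean_load_le:
  assumes "l < n" and "\<forall>k<n. \<bar>real (x l) - real (x k)\<bar> \<le> B"
  shows "\<bar>real (x l) - mean_load n x\<bar> \<le> B"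
proof -
  have n: "0 < n" using assms(1) by simp
  have "real (x l) - mean_load n x = (\<Sum>k<n. real (x l) - real (x k)) / real n"
    using n unfolding mean_load_def by (simp add: sum_subtractf field_simps)
  then have "\<bar>real (x l) - mean_load n x\<bar> = \<bar>\<Sum>k<n. real (x l) - real (x k)\<bar> / real n"
    by simp
  also have "\<dots> \<le> (\<Sum>k<n. \<bar>real (x l) - real (x k)\<bar>) / real n"
    by (intro divide_right_mono sum_abs) simp
  also have "\<dots> \<le> (\<Sum>k<n. B) / real n"
    by (intro divide_right_mono sum_mono) (use assms in auto)
  also have "\<dots> = B" using n by simp
  finally show ?thesis .
qed

theorem lemma3p4:
  fixes n K :: nat and S :: "nat \<Rightarrow> nat list" and lam :: "nat \<Rightarrow> real"
    and alpha :: "nat \<Rightarrow> nat \<Rightarrow> real" and pol :: policy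
  assumes nbhd: "\<forall>i<K. S i \<noteq> [] \<and> distinct (S i) \<and> set (S i) \<subseteq> {..<n}"
    and cover: "(\<Union>i<K. set (S i)) = {..<n}"
    and lam_pos: "\<forall>i<K. lam i > 0"
    and lam_sum: "(\<Sum>i<K. lam i) = 1"
    and conn: "graph_connected n K S"
    and alpha_pos: "\<forall>i<K. \<forall>j<length (S i). alpha i j > 0"
    and alpha_row: "\<forall>i<K. (\<Sum>j<length (S i). alpha i j) = lam i"
    and alpha_node: "\<forall>l<n. (\<Sum>i<K. \<Sum>j<length (S i).
                         alpha i j * (if l = S i ! j then 1 else 0)) = 1 / real n"
    and policy: "pol = JSQ \<or>
                 (\<exists>eps. pol = PSERP eps \<and> 0 < eps \<and>
                        (\<forall>i<K. \<forall>j<length (S i). eps < alpha i j))"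
  shows "\<exists>c2 > 0. \<exists>a > 0. \<forall>x :: nat \<Rightarrow> nat.
           Max ((\<lambda>l. \<bar>real (x l) - mean_load n x\<bar>) ` {..<n}) \<ge> a \<longrightarrow>
           measure_pmf.expectation (step_pmf pol K S lam alpha x) (fdev n) - fdev n x
             \<le> - c2 * sqrt (fdev n x)"
proof -
  have ne: "\<forall>i<K. S i \<noteq> []" and subset: "\<forall>i<K. set (S i) \<subseteq> {..<n}"
    using nbhd by auto
  have "0 < K" using lam_sum by (cases K) auto
  then have "hd (S 0) \<in> set (S 0)" and "set (S 0) \<subseteq> {..<n}" using ne subset by auto
  then have "hd (S 0) < n" by auto
  then have "0 < n" by simp
  obtain c where "0 < c" and margin: "\<forall>i<K. routing_margin pol S lam alpha i c"
    using routing_margin_policy[OF ne lam_pos alpha_pos alpha_row policy] .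
  obtain M where "0 < M"
    and gap: "\<forall>x j k. j < n \<longrightarrow> k < n \<longrightarrow> \<bar>real (x j) - real (x k)\<bar> \<le> M * total_range K S x"
    using load_gap_le_total_range[OF conn ne] .
  have "measure_pmf.expectation (step_pmf pol K S lam alpha x) (fdev n) - fdev n x
          \<le> - (c / (M * sqrt (real n))) * sqrt (fdev n x)"
    if large: "M / c \<le> Max ((\<lambda>l. \<bar>real (x l) - mean_load n x\<bar>) ` {..<n})" for x
  proof -
    have dev: "\<forall>l<n. \<bar>real (x l) - mean_load n x\<bar> \<le> M * total_range K S x"
      using gap by (auto intro: abs_sub_mean_load_le)
    then have "Max ((\<lambda>l. \<bar>real (x l) - mean_load n x\<bar>) ` {..<n}) \<le> M * total_range K S x"
      using \<open>0 < n\<close> by (intro Max.boundedI) auto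
    then have "M / c \<le> M * total_range K S x" using large by linarith
    then have "1 \<le> c * total_range K S x"
      using \<open>0 < c\<close> \<open>0 < M\<close> by (simp add: field_simps)
    moreover have "c / (M * sqrt (real n)) * sqrt (fdev n x) \<le> c * total_range K S x"
      using sqrt_fdev_le[OF dev] \<open>0 < c\<close> \<open>0 < M\<close> \<open>0 < n\<close>
      by (simp add: field_simps)
    ultimately show ?thesis
      using expectation_fdev_step_le[OF subset _ lam_sum margin alpha_node, of x] lam_pos
      by (simp add: less_imp_le)
  qed
  moreover have "0 < c / (M * sqrt (real n))" and "0 < M / c"
    using \<open>0 < c\<close> \<open>0 < M\<close> \<open>0 < n\<close> by auto
  ultimately show ?thesis by blast
qed

end
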